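(* Let $\odot$ be a pseudo-multiplication on $[0,\infty]$ and let $\phi$ be the supremum of the set of $\odot$-finite elements. Then there do not exist $t,t'\in[0,\infty]$ with $t<\phi<t'$ and $t\odot t'=\phi$.
   Context: A pseudo-multiplication is a binary operation $\odot:[0,\infty]\times[0,\infty]\to[0,\infty]$ such that: $\odot$ is associative; $\odot$ is continuous on $(0,\infty)\times[0,\infty]$; for every $t$, the map $s\mapsto s\odot t$ is continuous on $(0,\infty]$; $\odot$ is nondecreasing in each argument; there is a left identity element $1_{\odot}$, i.e. $1_{\odot}\odot t=t$ for all $t$; there are no zero divisors, i.e. $s\odot t=0$ implies $s=0$ or $t=0$; and $0$ is an annihilator, i.e. $0\odot t=t\odot 0=0$ for all $t$. For $t\in[0,\infty]$ put $O(t)=\inf_{s>0} s\odot t$. An element $t$ is called $\odot$-finite if $O(t)=0$. *)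

theory Defs
  imports "HOL-Analysis.Analysis" "HOL-Library.Extended_Nonnegative_Real"
begin

definition pseudo_mult :: "(ennreal \<Rightarrow> ennreal \<Rightarrow> ennreal) \<Rightarrow> bool" where
  "pseudo_mult f \<longleftrightarrow>
     (\<forall>a b c. f (f a b) c = f a (f b c)) \<and>
     continuous_on ({0<..<\<infinity>} \<times> UNIV) (\<lambda>(s, t). f s t) \<and>
     (\<forall>t. continuous_on {0<..} (\<lambda>s. f s t)) \<and>
     (\<forall>s s' t. s \<le> s' \<longrightarrow> f s t \<le> f s' t) \<and>
     (\<forall>s t t'. t \<le> t' \<longrightarrow> f s t \<le> f s t') \<and>
     (\<exists>e. \<forall>t. f e t = t) \<and>
     (\<forall>s t. f s t = 0 \<longrightarrow> s = 0 \<or> t = 0) \<and>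
     (\<forall>t. f 0 t = 0 \<and> f t 0 = 0)"

definition pm_O :: "(ennreal \<Rightarrow> ennreal \<Rightarrow> ennreal) \<Rightarrow> ennreal \<Rightarrow> ennreal" where
  "pm_O f t = (INF s\<in>{0<..}. f s t)"

definition pm_finite :: "(ennreal \<Rightarrow> ennreal \<Rightarrow> ennreal) \<Rightarrow> ennreal \<Rightarrow> bool" where
  "pm_finite f t \<longleftrightarrow> pm_O f t = 0"

end

theory Submission
  imports Defs
begin

text \<open>If \<open>t \<odot> t' = \<phi>\<close> with \<open>t > 0\<close> and \<open>t' > \<phi>\<close>, then \<open>t'\<close> is not \<open>\<odot>\<close>-finite and
  \<open>O(\<phi>) = O(t \<odot> t') \<ge> O(t') > 0\<close>. On the other hand \<open>\<phi>\<close> is finite, so by continuity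
  \<open>\<phi> \<odot> x < \<phi>\<close> for small \<open>x > 0\<close>; then \<open>\<phi> \<odot> x\<close> lies below a \<open>\<odot>\<close>-finite element and
  \<open>0 = O(\<phi> \<odot> x) \<ge> O(\<phi>) \<odot> x > 0\<close>, as there are no zero divisors.\<close>

lemma pseudo_mult_assoc: "pseudo_mult f \<Longrightarrow> f (f a b) c = f a (f b c)"
  by (simp add: pseudo_mult_def)

lemma pseudo_mult_continuous:
  "pseudo_mult f \<Longrightarrow> continuous_on ({0<..<\<infinity>} \<times> UNIV) (\<lambda>(s, t). f s t)"
  by (simp add: pseudo_mult_def)

lemma pseudo_mult_mono_left: "pseudo_mult f \<Longrightarrow> s \<le> s' \<Longrightarrow> f s t \<le> f s' t"
  by (simp add: pseudo_mult_def)

lemma pseudo_mult_mono_right: "pseudo_mult f \<Longrightarrow> t \<le> t' \<Longrightarrow> f s t \<le> f s t'"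
  by (simp add: pseudo_mult_def)

lemma pseudo_mult_eq_0_iff: "pseudo_mult f \<Longrightarrow> f s t = 0 \<longleftrightarrow> s = 0 \<or> t = 0"
  by (auto simp: pseudo_mult_def)

lemma pseudo_mult_0_left: "pseudo_mult f \<Longrightarrow> f 0 t = 0"
  by (simp add: pseudo_mult_eq_0_iff)

lemma pseudo_mult_0_right: "pseudo_mult f \<Longrightarrow> f s 0 = 0"
  by (simp add: pseudo_mult_eq_0_iff)

lemma pm_O_mono:
  assumes "pseudo_mult f" and "t \<le> t'"
  shows "pm_O f t \<le> pm_O f t'"
  unfolding pm_O_def by (rule INF_mono) (use pseudo_mult_mono_right[OF assms] in blast)

lemma pm_O_mult_ge_left:
  assumes pm: "pseudo_mult f"
  shows "f (pm_O f a) b \<le> pm_O f (f a b)"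
  unfolding pm_O_def
proof (rule INF_greatest)
  fix s :: ennreal
  assume "s \<in> {0<..}"
  then have "(INF u\<in>{0<..}. f u a) \<le> f s a"
    by (rule INF_lower)
  then have "f (INF u\<in>{0<..}. f u a) b \<le> f (f s a) b"
    by (rule pseudo_mult_mono_left[OF pm])
  then show "f (INF u\<in>{0<..}. f u a) b \<le> f s (f a b)"
    by (simp only: pseudo_mult_assoc[OF pm])
qed

lemma pm_O_mult_ge_right:
  assumes pm: "pseudo_mult f" and "a > 0"
  shows "pm_O f b \<le> pm_O f (f a b)"
  unfolding pm_O_def
proof (rule INF_greatest)
  fix s :: ennreal
  assume "s \<in> {0<..}"
  then have "f s a \<in> {0<..}"
    using \<open>a > 0\<close> by (simp add: pseudo_mult_eq_0_iff[OF pm] zero_less_iff_neq_zero)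
  then have "(INF u\<in>{0<..}. f u b) \<le> f (f s a) b"
    by (rule INF_lower)
  then show "(INF u\<in>{0<..}. f u b) \<le> f s (f a b)"
    by (simp only: pseudo_mult_assoc[OF pm])
qed

lemma pm_finite_less_Sup:
  assumes pm: "pseudo_mult f" and "x < Sup {t. pm_finite f t}"
  shows "pm_finite f x"
proof -
  obtain z where "pm_finite f z" "x < z"
    using assms(2) by (auto simp: less_Sup_iff)
  then show ?thesis
    using pm_O_mono[OF pm less_imp_le[OF \<open>x < z\<close>]] by (simp add: pm_finite_def)
qed

lemma pseudo_mult_tendsto_0_right:
  assumes pm: "pseudo_mult f" and "0 < s" "s < \<infinity>"
  shows "(f s \<longlongrightarrow> 0) (at_right 0)"
proof -
  have "((\<lambda>x. (\<lambda>(s, t). f s t) (s, x)) \<longlongrightarrow> (\<lambda>(s, t). f s t) (s, 0)) (at_right 0)"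
    using assms
    by (intro continuous_on_tendsto_compose[OF pseudo_mult_continuous[OF pm]])
       (auto intro!: tendsto_Pair tendsto_ident_at)
  then show ?thesis
    by (simp add: pseudo_mult_0_right[OF pm])
qed

lemma pm_finite_le_Sup:
  assumes pm: "pseudo_mult f" and le: "s \<le> Sup {t. pm_finite f t}" and "s < \<infinity>"
  shows "pm_finite f s"
proof (cases "s = 0")
  case True
  have "pm_O f s \<le> f 1 s"
    unfolding pm_O_def by (rule INF_lower) simp
  then show ?thesis
    by (simp add: True pm_finite_def pseudo_mult_0_right[OF pm])
next
  case False
  then have "s > 0" by (simp add: zero_less_iff_neq_zero)
  have "(f s \<longlongrightarrow> 0) (at_right 0)"
    using pm \<open>0 < s\<close> \<open>s < \<infinity>\<close> by (rule pseudo_mult_tendsto_0_right)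
  then have "\<forall>\<^sub>F x in at_right 0. f s x < s"
    using \<open>0 < s\<close> by (rule order_tendstoD)
  then have "\<exists>b>0. \<forall>x>0. x < b \<longrightarrow> f s x < s"
    by (rule eventually_at_right[OF zero_less_one, THEN iffD1])
  then obtain b where "b > 0" and below: "\<And>x. 0 < x \<Longrightarrow> x < b \<Longrightarrow> f s x < s"
    by blast
  obtain x :: ennreal where "0 < x" "x < b"
    using dense \<open>b > 0\<close> by blast
  then have x: "x > 0" "f s x < s"
    using below by auto
  have "f s x < Sup {t. pm_finite f t}"
    using x(2) le by (rule less_le_trans)
  then have "pm_O f (f s x) = 0"
    unfolding pm_finite_def[symmetric] by (rule pm_finite_less_Sup[OF pm])
  then have "f (pm_O f s) x = 0"
    using pm_O_mult_ge_left[OF pm, of s x] by simp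
  then show ?thesis
    using x(1) by (auto simp: pm_finite_def pseudo_mult_eq_0_iff[OF pm])
qed

theorem corollary2p9:
  fixes f :: "ennreal \<Rightarrow> ennreal \<Rightarrow> ennreal"
  assumes "pseudo_mult f"
  shows "\<not> (\<exists>t t'. t < Sup {x. pm_finite f x} \<and> Sup {x. pm_finite f x} < t'
                   \<and> f t t' = Sup {x. pm_finite f x})"
proof
  let ?\<phi> = "Sup {x. pm_finite f x}"
  assume "\<exists>t t'. t < ?\<phi> \<and> ?\<phi> < t' \<and> f t t' = ?\<phi>"
  then obtain t t' where "t < ?\<phi>" "?\<phi> < t'" and prod: "f t t' = ?\<phi>"
    by blast
  have "t \<noteq> 0"
    using \<open>t < ?\<phi>\<close> prod pseudo_mult_0_left[OF assms] by auto
  then have "t > 0"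
    by (simp add: zero_less_iff_neq_zero)
  have "\<not> pm_finite f t'"
  proof
    assume "pm_finite f t'"
    then have "t' \<le> ?\<phi>"
      by (simp add: Sup_upper)
    with \<open>?\<phi> < t'\<close> show False by simp
  qed
  moreover have "pm_O f t' \<le> pm_O f ?\<phi>"
    using pm_O_mult_ge_right[OF assms \<open>t > 0\<close>, of t'] by (simp only: prod)
  ultimately have "\<not> pm_finite f ?\<phi>"
    unfolding pm_finite_def by (metis le_zero_eq)
  moreover have "?\<phi> < \<infinity>"
    unfolding infinity_ennreal_def by (rule order.strict_trans2[OF \<open>?\<phi> < t'\<close> top_greatest])
  then have "pm_finite f ?\<phi>"
    by (rule pm_finite_le_Sup[OF assms order_refl])
  ultimately show False by contradiction
qed

end
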